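(* Let $k$ and $a_n$ be integers with $a_n\ge k-1\ge 2$, and let $n=a_nk$. Then $src^*(C_n(\{1,k\}))=rc^*(C_n(\{1,k\}))=a_n+k-2$.
   Context: For $n\ge 2$ and $S\subseteq\{1,\dots,n-1\}$, the circulant digraph $C_n(S)$ has vertex set $\{v_0,\dots,v_{n-1}\}$ and arcs $v_iv_j$ for all $i,j$ with $j-i\equiv s \pmod n$ for some $s\in S$. For a strongly connected digraph $D$ and an arc-colouring $\Gamma:A(D)\to\{1,\dots,k\}$, a directed path is rainbow if its arcs have pairwise distinct colours. $\Gamma$ is rainbow connected if for every ordered pair of distinct vertices $x,y$ there is a rainbow directed $xy$-path; $rc^*(D)$ is the minimum number of colours of such a colouring. $\Gamma$ is strongly rainbow connected if for every ordered pair of distinct vertices $x,y$ there is a rainbow directed $xy$-path of length $d_D(x,y)$; $src^*(D)$ is the minimum such number. *)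

theory Defs
  imports Main
begin

definition circulant_arcs :: "nat \<Rightarrow> nat set \<Rightarrow> (nat \<times> nat) set" where
  "circulant_arcs n S = {(i, j). i < n \<and> j < n \<and>
      (\<exists>s\<in>S. (int j - int i) mod int n = int s mod int n)}"

definition circulant_verts :: "nat \<Rightarrow> nat set" where
  "circulant_verts n = {..<n}"

definition path_arcs :: "nat list \<Rightarrow> (nat \<times> nat) list" where
  "path_arcs p = zip p (tl p)"

definition is_dipath :: "(nat \<times> nat) set \<Rightarrow> nat list \<Rightarrow> nat \<Rightarrow> nat \<Rightarrow> bool" where
  "is_dipath A p x y \<longleftrightarrow> p \<noteq> [] \<and> hd p = x \<and> last p = y \<and> distinct p \<and>
      set (path_arcs p) \<subseteq> A"

definition dist_di :: "(nat \<times> nat) set \<Rightarrow> nat \<Rightarrow> nat \<Rightarrow> nat" where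
  "dist_di A x y = (LEAST l. \<exists>p. is_dipath A p x y \<and> length p - 1 = l)"

definition rainbow :: "((nat \<times> nat) \<Rightarrow> nat) \<Rightarrow> nat list \<Rightarrow> bool" where
  "rainbow \<Gamma> p \<longleftrightarrow> distinct (map \<Gamma> (path_arcs p))"

definition is_colouring :: "(nat \<times> nat) set \<Rightarrow> nat \<Rightarrow> ((nat \<times> nat) \<Rightarrow> nat) \<Rightarrow> bool" where
  "is_colouring A k \<Gamma> \<longleftrightarrow> (\<forall>a\<in>A. \<Gamma> a \<in> {1..k})"

definition rainbow_connected ::
  "nat set \<Rightarrow> (nat \<times> nat) set \<Rightarrow> ((nat \<times> nat) \<Rightarrow> nat) \<Rightarrow> bool" where
  "rainbow_connected V A \<Gamma> \<longleftrightarrow>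
     (\<forall>x\<in>V. \<forall>y\<in>V. x \<noteq> y \<longrightarrow> (\<exists>p. is_dipath A p x y \<and> rainbow \<Gamma> p))"

definition strongly_rainbow_connected ::
  "nat set \<Rightarrow> (nat \<times> nat) set \<Rightarrow> ((nat \<times> nat) \<Rightarrow> nat) \<Rightarrow> bool" where
  "strongly_rainbow_connected V A \<Gamma> \<longleftrightarrow>
     (\<forall>x\<in>V. \<forall>y\<in>V. x \<noteq> y \<longrightarrow>
        (\<exists>p. is_dipath A p x y \<and> length p - 1 = dist_di A x y \<and> rainbow \<Gamma> p))"

definition rc_star :: "nat set \<Rightarrow> (nat \<times> nat) set \<Rightarrow> nat" where
  "rc_star V A = (LEAST k. \<exists>\<Gamma>. is_colouring A k \<Gamma> \<and> rainbow_connected V A \<Gamma>)"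

definition src_star :: "nat set \<Rightarrow> (nat \<times> nat) set \<Rightarrow> nat" where
  "src_star V A = (LEAST k. \<exists>\<Gamma>. is_colouring A k \<Gamma> \<and> strongly_rainbow_connected V A \<Gamma>)"

end

theory Submission
  imports Defs
begin

text \<open>Write the vertices of \<open>C\<^sub>n({1, k})\<close>, \<open>n = a k\<close>, as \<open>q k + r\<close> with row \<open>q < a\<close> and
  column \<open>r < k\<close>. An arc of step \<open>k\<close> moves one row down and an arc of step 1 one column
  right (the last column continuing in the first column of the next row). A path from \<open>u\<close> with
  \<open>x\<close> steps right and \<open>y\<close> steps down ends at \<open>(u + x + y k) mod n\<close>, so the distance from \<open>u\<close>
  to \<open>v\<close> is \<open>Q + R\<close>, where \<open>Q k + R = (v - u) mod n\<close> with \<open>R < k\<close>. In particular the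
  distance from 1 to 0 is \<open>(a - 1) + (k - 1)\<close>, which is the lower bound.

  For the upper bound, the down arcs leaving row \<open>q\<close> get colour \<open>q + 1\<close>. In row \<open>\<rho>\<close> the right arc
  leaving the last column also gets the row colour \<open>\<rho> + 1\<close>, the one leaving the special column
  \<open>min \<rho> (k - 2)\<close> gets the colour of the next row, and the remaining \<open>k - 2\<close> columns get the extra
  colours \<open>a + 1, \<dots>, a + k - 2\<close>. A shortest path is then made rainbow by ordering its \<open>Q\<close> down
  steps and \<open>R\<close> right steps so that its horizontal runs avoid the special columns whose colours
  already occur among its down steps. For \<open>a = 2\<close> (so \<open>k = 3\<close>) an explicit colouring is used.\<close>

datatype step = Right | Down

lemma count_list_replicate: "count_list (replicate t x) y = (if x = y then t else 0)"
  by (induction t) auto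

lemma length_eq_count_Right_Down: "length ms = count_list ms Right + count_list ms Down"
proof (induction ms)
  case (Cons m ms)
  then show ?case by (cases m) auto
qed simp

lemma distinct_if_same_set_length:
  "distinct ys \<Longrightarrow> set xs = set ys \<Longrightarrow> length xs = length ys \<Longrightarrow> distinct xs"
  by (metis card_distinct distinct_card)

lemma path_arcs_Cons: "path_arcs (x # xs) = (if xs = [] then [] else (x, hd xs) # path_arcs xs)"
  by (cases xs) (auto simp: path_arcs_def)

lemma length_path_arcs: "length (path_arcs p) = length p - 1"
  by (simp add: path_arcs_def)

lemma rainbow_path_length_le:
  assumes "is_colouring A m \<Gamma>" "set (path_arcs p) \<subseteq> A" "rainbow \<Gamma> p"
  shows "length p - 1 \<le> m"
proof -
  have "set (map \<Gamma> (path_arcs p)) \<subseteq> {1..m}"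
    using assms(1,2) unfolding is_colouring_def by auto
  then have "card (set (map \<Gamma> (path_arcs p))) \<le> m"
    using card_mono[of "{1..m}"] by fastforce
  moreover have "card (set (map \<Gamma> (path_arcs p))) = length p - 1"
    using assms(3) distinct_card by (fastforce simp: rainbow_def length_path_arcs)
  ultimately show ?thesis by simp
qed

lemma strongly_rainbow_connected_imp_rainbow_connected:
  "strongly_rainbow_connected V A \<Gamma> \<Longrightarrow> rainbow_connected V A \<Gamma>"
  unfolding strongly_rainbow_connected_def rainbow_connected_def by blast

lemma src_star_rc_star_eqI:
  assumes "is_colouring A m \<Gamma>" "strongly_rainbow_connected V A \<Gamma>"
    and "\<And>m' \<Gamma>'. is_colouring A m' \<Gamma>' \<Longrightarrow> rainbow_connected V A \<Gamma>' \<Longrightarrow> m \<le> m'"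
  shows "src_star V A = m \<and> rc_star V A = m"
proof
  show "src_star V A = m"
    unfolding src_star_def
  proof (rule Least_equality)
    show "\<exists>\<Gamma>. is_colouring A m \<Gamma> \<and> strongly_rainbow_connected V A \<Gamma>"
      using assms(1,2) by blast
  qed (use assms(3) strongly_rainbow_connected_imp_rainbow_connected in blast)
  show "rc_star V A = m"
    unfolding rc_star_def
  proof (rule Least_equality)
    show "\<exists>\<Gamma>. is_colouring A m \<Gamma> \<and> rainbow_connected V A \<Gamma>"
      using assms(1,2) strongly_rainbow_connected_imp_rainbow_connected by blast
  qed (use assms(3) in blast)
qed

lemma inj_on_mod_interval: "inj_on (\<lambda>x::nat. x mod n) {P..<P + n}"
proof -
  have no_collision: False if "x < y" "x mod n = y mod n" "P \<le> x" "y < P + n" for x y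
  proof -
    have "n dvd y - x" using that(1,2) by (metis mod_eq_dvd_iff_nat less_imp_le)
    moreover have "0 < y - x" "y - x < n" using that by auto
    ultimately show False using dvd_imp_le by fastforce
  qed
  show ?thesis
  proof (rule inj_onI)
    fix x y assume "x \<in> {P..<P + n}" "y \<in> {P..<P + n}" "x mod n = y mod n"
    then show "x = y"
      using no_collision[of x y] no_collision[of y x] by (cases x y rule: linorder_cases) auto
  qed
qed

lemma circulant_arcs_1_k_iff:
  assumes "1 < k" "k < n"
  shows "(i, j) \<in> circulant_arcs n {1, k} \<longleftrightarrow> i < n \<and> (j = (i + 1) mod n \<or> j = (i + k) mod n)"
proof -
  have mod_eq_iff: "(int j - int i) mod int n = int s mod int n \<longleftrightarrow> j = (i + s) mod n"
    if "j < n" for s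
  proof -
    have "(int j - int i) mod int n = int s mod int n \<longleftrightarrow> int j mod int n = (int i + int s) mod int n"
      by (metis add_diff_cancel_left' diff_add_cancel mod_add_left_eq mod_diff_left_eq)
    also have "\<dots> \<longleftrightarrow> int j = int ((i + s) mod n)"
      using that by (simp add: zmod_int)
    finally show ?thesis by simp
  qed
  have "(i, j) \<in> circulant_arcs n {1, k} \<longleftrightarrow> i < n \<and> j < n \<and>
     ((int j - int i) mod int n = int 1 mod int n \<or> (int j - int i) mod int n = int k mod int n)"
    unfolding circulant_arcs_def by auto
  also have "\<dots> \<longleftrightarrow> i < n \<and> j < n \<and> (j = (i + 1) mod n \<or> j = (i + k) mod n)"
    using mod_eq_iff by blast
  also have "\<dots> \<longleftrightarrow> i < n \<and> (j = (i + 1) mod n \<or> j = (i + k) mod n)"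
    using assms by auto
  finally show ?thesis .
qed

section \<open>Shortest paths in the grid\<close>

locale circulant_grid =
  fixes k a :: nat
  assumes k_ge_3: "3 \<le> k" and a_ge_2: "2 \<le> a"
begin

abbreviation n :: nat where "n \<equiv> a * k"

abbreviation arcs :: "(nat \<times> nat) set" where "arcs \<equiv> circulant_arcs n {1, k}"

lemma k_less_n: "k < n"
  using a_ge_2 k_ge_3 mult_le_mono1[of 2 a k] by simp

lemma n_pos: "0 < n"
  using k_less_n by simp

lemma arcs_iff: "(i, j) \<in> arcs \<longleftrightarrow> i < n \<and> (j = (i + 1) mod n \<or> j = (i + k) mod n)"
  using circulant_arcs_1_k_iff k_ge_3 k_less_n by simp

definition down_steps :: "nat \<Rightarrow> nat \<Rightarrow> nat" where
  "down_steps u v = ((v + n - u) mod n) div k"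

definition right_steps :: "nat \<Rightarrow> nat \<Rightarrow> nat" where
  "right_steps u v = ((v + n - u) mod n) mod k"

lemma mod_n_div_k: "(P mod n) div k = (P div k) mod a"
proof -
  have "P mod n = k * (P div k mod a) + P mod k"
    using mod_mult2_eq[of P k a] by (simp add: mult.commute)
  then show ?thesis using k_ge_3 by simp
qed

lemma mod_n_mod_k: "(P mod n) mod k = P mod k"
  by (simp add: mod_mod_cancel)

lemma down_steps_less: "down_steps u v < a"
  unfolding down_steps_def mod_n_div_k using a_ge_2 by simp

lemma right_steps_less: "right_steps u v < k"
  unfolding right_steps_def using k_ge_3 by simp

lemma down_right_steps: "down_steps u v * k + right_steps u v = (v + n - u) mod n"
  unfolding down_steps_def right_steps_def by simp

lemma dipath_last_mod:
  assumes "set (path_arcs p) \<subseteq> arcs" "p \<noteq> []" "hd p < n"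
  shows "\<exists>x y. x + y = length p - 1 \<and> last p = (hd p + x + y * k) mod n"
  using assms
proof (induction p)
  case (Cons v rest)
  show ?case
  proof (cases rest)
    case Nil
    then show ?thesis using Cons.prems by auto
  next
    case (Cons w rest')
    have "(v, w) \<in> arcs" and sub: "set (path_arcs rest) \<subseteq> arcs"
      using Cons.prems(1) Cons by (auto simp: path_arcs_Cons)
    then have "w < n" and w: "w = (v + 1) mod n \<or> w = (v + k) mod n"
      using arcs_iff n_pos by auto
    obtain x y where xy: "x + y = length rest - 1" "last rest = (w + x + y * k) mod n"
      using Cons.IH[OF sub] Cons \<open>w < n\<close> by auto
    from w show ?thesis
    proof
      assume "w = (v + 1) mod n"
      then have "last (v # rest) = ((v + 1) mod n + (x + y * k)) mod n"
        using xy Cons by (simp add: add.assoc)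
      also have "\<dots> = ((v + 1) + (x + y * k)) mod n"
        by (rule mod_add_left_eq)
      finally have "last (v # rest) = (v + (x + 1) + y * k) mod n"
        by (simp add: add_ac)
      then show ?thesis using xy Cons by (intro exI[of _ "x + 1"] exI[of _ y]) auto
    next
      assume "w = (v + k) mod n"
      then have "last (v # rest) = ((v + k) mod n + (x + y * k)) mod n"
        using xy Cons by (simp add: add.assoc)
      also have "\<dots> = ((v + k) + (x + y * k)) mod n"
        by (rule mod_add_left_eq)
      finally have "last (v # rest) = (v + x + (y + 1) * k) mod n"
        by (simp add: add_ac)
      then show ?thesis using xy Cons by (intro exI[of _ x] exI[of _ "y + 1"]) auto
    qed
  qed
qed simp

lemma mod_diff_eq_offset:
  assumes "u < n" "(u + s) mod n = v"
  shows "(v + n - u) mod n = s mod n"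
proof -
  have "v < n" using assms(2) n_pos by auto
  then have "int ((v + n - u) mod n) = (int v - int u + int n) mod int n"
    using assms(1) by (simp add: zmod_int of_nat_diff algebra_simps)
  also have "\<dots> = ((int u + int s) mod int n - int u) mod int n"
    using assms(2) by (metis mod_add_self2 of_nat_add zmod_int)
  also have "\<dots> = int (s mod n)"
    by (simp add: mod_diff_left_eq zmod_int)
  finally show ?thesis by simp
qed

lemma steps_lower_bound:
  assumes "u < n" "(u + x + y * k) mod n = v"
  shows "down_steps u v + right_steps u v \<le> x + y"
proof -
  have d: "(v + n - u) mod n = (x + y * k) mod n"
    using mod_diff_eq_offset assms by (simp add: add.assoc)
  have "down_steps u v = (x div k + y) mod a"
    unfolding down_steps_def d mod_n_div_k using k_ge_3 by (simp add: add.commute)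
  moreover have "right_steps u v = x mod k"
    unfolding right_steps_def d mod_n_mod_k by simp
  moreover have "x div k + x mod k \<le> x"
    using div_mult_mod_eq[of x k] k_ge_3 mult_le_mono2[of 1 k "x div k"] by linarith
  ultimately show ?thesis using mod_less_eq_dividend[of "x div k + y" a] by linarith
qed

lemma dipath_length_ge:
  assumes "is_dipath arcs p u v" "u < n"
  shows "down_steps u v + right_steps u v \<le> length p - 1"
proof -
  have p: "p \<noteq> []" "hd p = u" "last p = v" "set (path_arcs p) \<subseteq> arcs"
    using assms(1) unfolding is_dipath_def by auto
  obtain x y where xy: "x + y = length p - 1" "(u + x + y * k) mod n = v"
    using dipath_last_mod[OF p(4,1)] p(2,3) assms(2) by metis
  show ?thesis using steps_lower_bound[OF assms(2) xy(2)] xy(1) by simp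
qed

fun shift :: "step \<Rightarrow> nat" where
  "shift Right = 1"
| "shift Down = k"

lemma shift_pos: "0 < shift m"
  using k_ge_3 by (cases m) auto

fun walk_points :: "nat \<Rightarrow> step list \<Rightarrow> nat list" where
  "walk_points P [] = [P]"
| "walk_points P (m # ms) = P # walk_points (P + shift m) ms"

definition walk :: "nat \<Rightarrow> step list \<Rightarrow> nat list" where
  "walk P ms = map (\<lambda>x. x mod n) (walk_points P ms)"

lemma walk_points_ne [simp]: "walk_points P ms \<noteq> []"
  by (cases ms) auto

lemma hd_walk_points [simp]: "hd (walk_points P ms) = P"
  by (cases ms) auto

lemma length_walk_points [simp]: "length (walk_points P ms) = Suc (length ms)"
  by (induction ms arbitrary: P) auto

lemma last_walk_points:
  "last (walk_points P ms) = P + count_list ms Right + count_list ms Down * k"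
proof (induction ms arbitrary: P)
  case (Cons m ms)
  then show ?case by (cases m) auto
qed simp

lemma walk_points_bounds:
  "x \<in> set (walk_points P ms) \<Longrightarrow> P \<le> x \<and> x \<le> P + count_list ms Right + count_list ms Down * k"
proof (induction ms arbitrary: P)
  case (Cons m ms)
  then show ?case by (cases m) fastforce+
qed simp

lemma sorted_walk_points: "sorted_wrt (<) (walk_points P ms)"
proof (induction ms arbitrary: P)
  case (Cons m ms)
  have "P < x" if "x \<in> set (walk_points (P + shift m) ms)" for x
    using walk_points_bounds[OF that] shift_pos[of m] by linarith
  then show ?case using Cons.IH by simp
qed simp

lemma distinct_walk:
  assumes "count_list ms Right < k" "count_list ms Down < a"
  shows "distinct (walk P ms)"
proof -
  have "count_list ms Down * k \<le> (a - 1) * k"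
    using assms(2) by (intro mult_le_mono1) linarith
  also have "\<dots> = n - k"
    by (simp add: diff_mult_distrib)
  finally have "count_list ms Right + count_list ms Down * k < n"
    using assms(1) k_less_n by linarith
  then have "set (walk_points P ms) \<subseteq> {P..<P + n}"
    using walk_points_bounds[of _ P ms] assms(1) k_less_n
    by (force simp: subset_iff)
  then have "inj_on (\<lambda>x. x mod n) (set (walk_points P ms))"
    using inj_on_mod_interval inj_on_subset by blast
  then show ?thesis
    unfolding walk_def using sorted_walk_points strict_sorted_iff distinct_map by blast
qed

lemma path_arcs_walk: "set (path_arcs (walk P ms)) \<subseteq> arcs"
proof (induction ms arbitrary: P)
  case (Cons m ms)
  have "(P mod n, (P + shift m) mod n) \<in> arcs"
    using arcs_iff n_pos by (cases m) (auto simp: mod_add_left_eq mod_Suc_eq)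
  moreover have "hd (walk (P + shift m) ms) = (P + shift m) mod n"
    by (simp add: walk_def hd_map)
  ultimately show ?case
    using Cons.IH[of "P + shift m"] by (simp add: walk_def path_arcs_Cons)
qed (simp add: walk_def path_arcs_def)

lemma walk_is_dipath:
  assumes "u < n" "v < n" "count_list ms Right = right_steps u v" "count_list ms Down = down_steps u v"
  shows "is_dipath arcs (walk u ms) u v" "length (walk u ms) - 1 = down_steps u v + right_steps u v"
proof -
  have "last (walk u ms) = (u + (down_steps u v * k + right_steps u v)) mod n"
    by (simp add: walk_def last_map last_walk_points assms(3,4) add_ac)
  also have "\<dots> = (u + (v + n - u)) mod n"
    by (simp add: down_right_steps mod_add_right_eq)
  also have "\<dots> = v"
    using assms(1,2) by simp
  finally have "last (walk u ms) = v" .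
  moreover have "distinct (walk u ms)"
    using distinct_walk assms(3,4) down_steps_less right_steps_less by simp
  ultimately show "is_dipath arcs (walk u ms) u v"
    unfolding is_dipath_def using path_arcs_walk assms(1) by (simp add: walk_def hd_map)
  show "length (walk u ms) - 1 = down_steps u v + right_steps u v"
    using length_eq_count_Right_Down[of ms] assms(3,4) by (simp add: walk_def)
qed

lemma dist_di_eq:
  assumes "u < n" "v < n"
  shows "dist_di arcs u v = down_steps u v + right_steps u v"
  unfolding dist_di_def
proof (rule Least_equality)
  let ?ms = "replicate (right_steps u v) Right @ replicate (down_steps u v) Down"
  show "\<exists>p. is_dipath arcs p u v \<and> length p - 1 = down_steps u v + right_steps u v"
    using walk_is_dipath[of u v ?ms] assms by (auto simp: count_list_replicate)
qed (use dipath_length_ge assms(1) in fastforce)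

lemma rainbow_connected_colours_ge:
  assumes "is_colouring arcs m \<Gamma>" "rainbow_connected {..<n} arcs \<Gamma>"
  shows "a + k - 2 \<le> m"
proof -
  have "1 < n" using k_less_n k_ge_3 by linarith
  then have "(1::nat) \<in> {..<n}" "(0::nat) \<in> {..<n}" using n_pos by simp_all
  then obtain p where p: "is_dipath arcs p 1 0" "rainbow \<Gamma> p"
    using assms(2) unfolding rainbow_connected_def by blast
  have e: "(0 + n - 1) mod n = (k - 1) + (a - 1) * k"
    using \<open>1 < n\<close> a_ge_2 k_ge_3 by (cases a) auto
  have "down_steps 1 0 = a - 1"
    unfolding down_steps_def e using k_ge_3 by (subst div_mult_self1) auto
  moreover have "right_steps 1 0 = k - 1"
    unfolding right_steps_def e using k_ge_3 by (subst mod_mult_self1) auto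
  ultimately have "a - 1 + (k - 1) \<le> length p - 1"
    using dipath_length_ge[OF p(1)] \<open>1 < n\<close> by simp
  moreover have "length p - 1 \<le> m"
    using rainbow_path_length_le assms(1) p unfolding is_dipath_def by blast
  ultimately show ?thesis using a_ge_2 k_ge_3 by linarith
qed

section \<open>Colourings by rows and columns\<close>

definition grid_colouring :: "(nat \<Rightarrow> nat \<Rightarrow> nat) \<Rightarrow> nat \<times> nat \<Rightarrow> nat" where
  "grid_colouring c = (\<lambda>(i, j). if j = (i + 1) mod n then c (i div k) (i mod k) else i div k + 1)"

fun step_colour :: "(nat \<Rightarrow> nat \<Rightarrow> nat) \<Rightarrow> nat \<Rightarrow> step \<Rightarrow> nat" where
  "step_colour c P Right = c ((P div k) mod a) (P mod k)"
| "step_colour c P Down = (P div k) mod a + 1"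

fun walk_colours :: "(nat \<Rightarrow> nat \<Rightarrow> nat) \<Rightarrow> nat \<Rightarrow> step list \<Rightarrow> nat list" where
  "walk_colours c P [] = []"
| "walk_colours c P (m # ms) = step_colour c P m # walk_colours c (P + shift m) ms"

lemma Suc_mod_neq_add_k_mod: "(P mod n + 1) mod n \<noteq> (P + k) mod n"
proof -
  have "P + 1 \<noteq> P + k" "P + 1 \<in> {P + 1..<P + 1 + n}" "P + k \<in> {P + 1..<P + 1 + n}"
    using k_ge_3 a_ge_2 less_SucI[OF k_less_n] by auto
  then have "(P + 1) mod n \<noteq> (P + k) mod n"
    using inj_on_mod_interval[of n "P + 1"] by (meson inj_on_contraD)
  then show ?thesis by (simp add: mod_Suc_eq)
qed

lemma grid_colouring_walk: "map (grid_colouring c) (path_arcs (walk P ms)) = walk_colours c P ms"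
proof (induction ms arbitrary: P)
  case (Cons m ms)
  have "grid_colouring c (P mod n, (P + shift m) mod n) = step_colour c P m"
    using Suc_mod_neq_add_k_mod[of P]
    by (cases m) (auto simp: grid_colouring_def mod_n_div_k mod_n_mod_k mod_Suc_eq)
  moreover have "hd (walk (P + shift m) ms) = (P + shift m) mod n"
    by (simp add: walk_def hd_map)
  ultimately show ?case
    using Cons.IH[of "P + shift m"] by (simp add: walk_def path_arcs_Cons)
qed (simp add: walk_def path_arcs_def)

definition row_colours :: "nat \<Rightarrow> nat \<Rightarrow> nat list" where
  "row_colours q t = map (\<lambda>x. x mod a + 1) [q..<q + t]"

lemma walk_colours_Downs_append:
  assumes "r < k"
  shows "walk_colours c (q * k + r) (replicate t Down @ ys) =
    row_colours q t @ walk_colours c ((q + t) * k + r) ys"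
  using assms
proof (induction t arbitrary: q)
  case (Suc t)
  then show ?case
    using Suc.IH[of "Suc q"] by (simp add: row_colours_def upt_conv_Cons algebra_simps del: upt_Suc)
qed (simp add: row_colours_def)

lemma walk_colours_Rights_append:
  assumes "r + t \<le> k"
  shows "walk_colours c (q * k + r) (replicate t Right @ ys) =
    map (c (q mod a)) [r..<r + t] @ walk_colours c (q * k + (r + t)) ys"
  using assms
proof (induction t arbitrary: r)
  case (Suc t)
  then show ?case
    using Suc.IH[of "Suc r"] by (simp add: upt_conv_Cons del: upt_Suc)
qed simp

lemma walk_colours_no_wrap:
  assumes "r + R < k"
  shows "walk_colours c (q * k + r) (replicate j Down @ replicate R Right @ replicate t Down)
    = row_colours q j @ map (c ((q + j) mod a)) [r..<r + R] @ row_colours (q + j) t"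
  using walk_colours_Downs_append[of r c q j] walk_colours_Rights_append[of r R c "q + j"]
    walk_colours_Downs_append[of "r + R" c "q + j" t "[]"] assms
  by simp

lemma walk_colours_wrap:
  assumes "r < k" "W < k"
  shows "walk_colours c (q * k + r)
      (replicate j Down @ replicate (k - r) Right @ replicate h Down @ replicate W Right @ replicate t Down)
    = row_colours q j @ map (c ((q + j) mod a)) [r..<k] @ row_colours (q + j + 1) h
      @ map (c ((q + j + 1 + h) mod a)) [0..<W] @ row_colours (q + j + 1 + h) t"
proof -
  let ?rest = "replicate h Down @ replicate W Right @ replicate t Down"
  have "walk_colours c ((q + j + 1) * k + 0) ?rest = row_colours (q + j + 1) h
      @ map (c ((q + j + 1 + h) mod a)) [0..<W] @ row_colours (q + j + 1 + h) t"
    using walk_colours_Downs_append[of 0 c "q + j + 1" h] walk_colours_Rights_append[of 0 W c "q + j + 1 + h"]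
      walk_colours_Downs_append[of W c "q + j + 1 + h" t "[]"] assms
    by simp
  moreover have "walk_colours c (q * k + r) (replicate j Down @ replicate (k - r) Right @ ?rest)
      = row_colours q j @ map (c ((q + j) mod a)) [r..<k] @ walk_colours c ((q + j) * k + (r + (k - r))) ?rest"
    using walk_colours_Downs_append[of r c q j] walk_colours_Rights_append[of r "k - r" c "q + j"] assms
    by simp
  moreover have "(q + j) * k + (r + (k - r)) = (q + j + 1) * k + 0"
    using assms(1) by simp
  ultimately show ?thesis
    by (simp only: append_assoc)
qed

lemma row_colours_add: "row_colours q (s + t) = row_colours q s @ row_colours (q + s) t"
  unfolding row_colours_def using upt_add_eq_append[of q "q + s" t] by (simp add: add.assoc)

lemma row_colours_one: "row_colours q 1 = [q mod a + 1]"
  by (simp add: row_colours_def)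

lemma mod_a_Suc_le: "x mod a + 1 \<le> a"
  using a_ge_2 by (simp add: Suc_le_eq)

lemma row_colours_le: "x \<in> set (row_colours q t) \<Longrightarrow> x \<le> a"
  unfolding row_colours_def using mod_a_Suc_le by auto

lemma distinct_row_colours:
  assumes "t \<le> a"
  shows "distinct (row_colours q t)"
proof -
  have "inj_on (\<lambda>x. x mod a) {q..<q + t}"
    by (rule inj_on_subset[OF inj_on_mod_interval[of a q]]) (use assms in auto)
  then show ?thesis
    unfolding row_colours_def distinct_map by (simp add: inj_on_def)
qed

lemma row_colours_mem:
  assumes "t \<le> a"
  shows "(q + m) mod a + 1 \<in> set (row_colours q t) \<longleftrightarrow> m mod a < t"
proof
  assume "(q + m) mod a + 1 \<in> set (row_colours q t)"
  then obtain x where x: "x \<in> {q..<q + t}" "(q + m) mod a = x mod a"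
    unfolding row_colours_def by auto
  then have "(q + m) mod a = (q + (x - q)) mod a" by simp
  then have "m mod a = (x - q) mod a" by (simp add: nat_mod_eq_iff)
  moreover have "x - q < t" "t \<le> a" using x assms by auto
  ultimately show "m mod a < t" by simp
next
  assume "m mod a < t"
  moreover have "(q + m) mod a = (q + m mod a) mod a" by (simp add: mod_add_right_eq)
  ultimately show "(q + m) mod a + 1 \<in> set (row_colours q t)"
    unfolding row_colours_def by force
qed

section \<open>Rainbow shortest walks\<close>

definition special_column :: "nat \<Rightarrow> nat" where
  "special_column \<rho> = min \<rho> (k - 2)"

definition right_colour :: "nat \<Rightarrow> nat \<Rightarrow> nat" where
  "right_colour \<rho> r =
    (if r = k - 1 then \<rho> + 1
     else if r = special_column \<rho> then (\<rho> + 1) mod a + 1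
     else if r < special_column \<rho> then a + 1 + r
     else a + r)"

lemma right_colour_bounds: "\<rho> < a \<Longrightarrow> r < k \<Longrightarrow> right_colour \<rho> r \<in> {1..a + k - 2}"
  using k_ge_3 mod_a_Suc_le[of "\<rho> + 1"] unfolding right_colour_def special_column_def by auto

lemma right_colour_last: "right_colour \<rho> (k - 1) = \<rho> + 1"
  by (simp add: right_colour_def)

lemma distinct_right_colour_segment:
  assumes "r2 \<le> k - 1"
  shows "distinct (map (right_colour \<rho>) [r1..<r2])"
proof -
  have "inj_on (right_colour \<rho>) {r1..<r2}"
    using assms mod_a_Suc_le[of "\<rho> + 1"] unfolding inj_on_def right_colour_def by auto
  then show ?thesis by (simp add: distinct_map)
qed

lemma right_colour_segment_gt_a:
  assumes "r2 \<le> k - 1" "x \<in> set (map (right_colour \<rho>) [r1..<r2])" "a < x"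
  shows "a + r1 \<le> x \<and> x \<le> a + r2"
  using assms mod_a_Suc_le[of "\<rho> + 1"] unfolding right_colour_def by (auto split: if_splits)

lemma right_colour_segment_le_a:
  assumes "r2 \<le> k - 1" "x \<in> set (map (right_colour \<rho>) [r1..<r2])" "x \<le> a"
  shows "x = (\<rho> + 1) mod a + 1 \<and> r1 \<le> special_column \<rho> \<and> special_column \<rho> < r2"
  using assms unfolding right_colour_def by (auto split: if_splits)

definition has_rainbow_walk :: "(nat \<Rightarrow> nat \<Rightarrow> nat) \<Rightarrow> nat \<Rightarrow> nat \<Rightarrow> nat \<Rightarrow> bool" where
  "has_rainbow_walk c P Q R \<longleftrightarrow>
     (\<exists>ms. count_list ms Down = Q \<and> count_list ms Right = R \<and> distinct (walk_colours c P ms))"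

lemma row_colours_disjoint_segment:
  assumes "r2 \<le> k - 1" "t \<le> a"
    and "r1 \<le> special_column ((q + m) mod a) \<Longrightarrow> special_column ((q + m) mod a) < r2 \<Longrightarrow>
      t \<le> (m + 1) mod a"
  shows "set (row_colours q t) \<inter> set (map (right_colour ((q + m) mod a)) [r1..<r2]) = {}"
proof (rule ccontr)
  assume "set (row_colours q t) \<inter> set (map (right_colour ((q + m) mod a)) [r1..<r2]) \<noteq> {}"
  then obtain x where x: "x \<in> set (row_colours q t)" "x \<in> set (map (right_colour ((q + m) mod a)) [r1..<r2])"
    by blast
  then have "x = ((q + m) mod a + 1) mod a + 1"
    and special: "r1 \<le> special_column ((q + m) mod a)" "special_column ((q + m) mod a) < r2"
    using right_colour_segment_le_a[OF assms(1)] row_colours_le by blast+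
  then have "(q + (m + 1)) mod a + 1 \<in> set (row_colours q t)"
    using x(1) by (simp add: mod_Suc_eq)
  then have "(m + 1) mod a < t"
    using row_colours_mem[OF assms(2), of q "m + 1"] by blast
  then show False
    using assms(3)[OF special] by simp
qed

lemma rainbow_walk_no_wrap:
  assumes "r + R < k" "Q < a"
  shows "has_rainbow_walk right_colour (q * k + r) Q R"
proof -
  define j where "j = Q - 1"
  define B where "B = map (right_colour ((q + j) mod a)) [r..<r + R]"
  have colours: "walk_colours right_colour (q * k + r) (replicate j Down @ replicate R Right @ replicate (Q - j) Down)
      = row_colours q j @ B @ row_colours (q + j) (Q - j)"
    using walk_colours_no_wrap assms(1) by (simp add: B_def)
  have rows: "row_colours q Q = row_colours q j @ row_colours (q + j) (Q - j)"
    using row_colours_add[of q j "Q - j"] by (simp add: j_def)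
  have "Q \<le> (j + 1) mod a"
    using assms(2) by (cases Q) (auto simp: j_def)
  then have "set (row_colours q Q) \<inter> set B = {}"
    unfolding B_def using assms by (intro row_colours_disjoint_segment) auto
  moreover have "distinct B"
    unfolding B_def using assms(1) by (intro distinct_right_colour_segment) simp
  ultimately have "distinct (row_colours q Q @ B)"
    using distinct_row_colours assms(2) by simp
  then have "distinct (walk_colours right_colour (q * k + r)
      (replicate j Down @ replicate R Right @ replicate (Q - j) Down))"
    unfolding colours by (rule distinct_if_same_set_length) (auto simp: rows)
  then show ?thesis
    unfolding has_rainbow_walk_def by (force simp: count_list_replicate j_def)
qed

lemma right_colour_segments_disjoint:
  assumes "W < r" "r < k"
    and "r \<le> special_column \<rho> \<Longrightarrow> special_column \<sigma> < W \<Longrightarrow> (\<rho> + 1) mod a \<noteq> (\<sigma> + 1) mod a"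
  shows "set (map (right_colour \<rho>) [r..<k - 1]) \<inter> set (map (right_colour \<sigma>) [0..<W]) = {}"
proof (rule ccontr)
  assume "set (map (right_colour \<rho>) [r..<k - 1]) \<inter> set (map (right_colour \<sigma>) [0..<W]) \<noteq> {}"
  then obtain x where x: "x \<in> set (map (right_colour \<rho>) [r..<k - 1])" "x \<in> set (map (right_colour \<sigma>) [0..<W])"
    by blast
  have ends: "k - 1 \<le> k - 1" "W \<le> k - 1" using assms(1,2) by linarith+
  show False
  proof (cases "x \<le> a")
    case True
    then show False
      using right_colour_segment_le_a[OF ends(1) x(1)] right_colour_segment_le_a[OF ends(2) x(2)] assms
      by auto
  next
    case False
    then have "a + r \<le> x" "x \<le> a + W"
      using right_colour_segment_gt_a[OF ends(1) x(1)] right_colour_segment_gt_a[OF ends(2) x(2)] by auto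
    then show False using assms(1) by linarith
  qed
qed

text \<open>The walk goes \<open>j\<close> steps down, right to the end of its row and on into the next row, \<open>h\<close> steps
  down, the remaining \<open>r + R - k\<close> steps right and the remaining steps down. Conditions C1--C3
  exclude the only possible repeated colours, those of the special columns met by the two
  horizontal runs.\<close>

lemma rainbow_walk_wrap:
  assumes r: "r < k" and Q: "Q < a" and R: "R < k" "k \<le> r + R" and jh: "j + h \<le> Q"
    and C1: "r \<le> special_column ((q + j) mod a) \<Longrightarrow> Q < (j + 1) mod a"
    and C2: "special_column ((q + (j + 1 + h)) mod a) < r + R - k \<Longrightarrow> Q < (j + h + 2) mod a"
    and C3: "r \<le> special_column ((q + j) mod a) \<Longrightarrow> special_column ((q + (j + 1 + h)) mod a) < r + R - k \<Longrightarrow>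
      (j + 1) mod a \<noteq> (j + h + 2) mod a"
  shows "has_rainbow_walk right_colour (q * k + r) Q R"
proof -
  define W where "W = r + R - k"
  define B1 where "B1 = map (right_colour ((q + j) mod a)) [r..<k - 1]"
  define B2 where "B2 = map (right_colour ((q + (j + 1 + h)) mod a)) [0..<W]"
  define ms where "ms = replicate j Down @ replicate (k - r) Right @ replicate h Down
    @ replicate W Right @ replicate (Q - j - h) Down"
  have W: "W < r" using R unfolding W_def by simp
  have "[r..<k] = [r..<k - 1] @ [k - 1]"
    using r upt_Suc_append[of r "k - 1"] by simp
  then have colours: "walk_colours right_colour (q * k + r) ms = row_colours q j @ (B1 @ [(q + j) mod a + 1])
      @ row_colours (q + j + 1) h @ B2 @ row_colours (q + j + 1 + h) (Q - j - h)"
    unfolding ms_def using walk_colours_wrap[of r W] r W right_colour_last[of "(q + j) mod a"]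
    by (simp add: B1_def B2_def add.assoc)
  have "Q + 1 = j + (1 + (h + (Q - j - h)))" using jh by simp
  then have rows: "row_colours q (Q + 1) = row_colours q j @ [(q + j) mod a + 1]
      @ row_colours (q + j + 1) h @ row_colours (q + j + 1 + h) (Q - j - h)"
    by (simp only: row_colours_add row_colours_one add.assoc)
  have "set (row_colours q (Q + 1)) \<inter> set B1 = {}"
    unfolding B1_def using Q C1 by (intro row_colours_disjoint_segment) auto
  moreover have "set (row_colours q (Q + 1)) \<inter> set B2 = {}"
    unfolding B2_def using Q C2 W r by (intro row_colours_disjoint_segment) (auto simp: W_def)
  moreover have "set B1 \<inter> set B2 = {}"
    unfolding B1_def B2_def
  proof (rule right_colour_segments_disjoint[OF W r])
    assume special: "r \<le> special_column ((q + j) mod a)" "special_column ((q + (j + 1 + h)) mod a) < W"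
    show "((q + j) mod a + 1) mod a \<noteq> ((q + (j + 1 + h)) mod a + 1) mod a"
    proof
      assume "((q + j) mod a + 1) mod a = ((q + (j + 1 + h)) mod a + 1) mod a"
      then have "(q + (j + 1)) mod a = (q + (j + h + 2)) mod a"
        by (simp add: mod_Suc_eq)
      then have "(j + 1) mod a = (j + h + 2) mod a"
        by (simp add: nat_mod_eq_iff)
      then show False
        using C3 special unfolding W_def by blast
    qed
  qed
  moreover have "distinct B1" "distinct B2"
    unfolding B1_def B2_def using W r by (auto intro: distinct_right_colour_segment)
  ultimately have "distinct (row_colours q (Q + 1) @ B1 @ B2)"
    using distinct_row_colours Q by auto
  then have "distinct (walk_colours right_colour (q * k + r) ms)"
    unfolding colours rows by (rule distinct_if_same_set_length) auto
  moreover have "count_list ms Down = Q" "count_list ms Right = R"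
    using jh r R by (simp_all add: ms_def W_def count_list_replicate)
  ultimately show ?thesis
    unfolding has_rainbow_walk_def by blast
qed

lemma special_column_eq: "\<rho> \<le> k - 2 \<Longrightarrow> special_column \<rho> = \<rho>"
  by (simp add: special_column_def)

lemma rainbow_walk_wrap_short:
  assumes "r < k" "Q + 3 \<le> a" "R < k" "k \<le> r + R"
  shows "has_rainbow_walk right_colour (q * k + r) Q R"
  using assms by (intro rainbow_walk_wrap[where j = Q and h = 0]) auto

text \<open>The first horizontal run lies in row \<open>r - 2\<close> and the second in row \<open>r - 1\<close>; in both the special
  column lies outside the run.\<close>

lemma rainbow_walk_wrap_aligned:
  assumes "r < k" "Q < a" "R < k" "k \<le> r + R" "j \<le> Q" "(q + j) mod a = r - 2" "k - 1 \<le> a"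
  shows "has_rainbow_walk right_colour (q * k + r) Q R"
proof -
  have "r - 2 + 1 \<le> k - 2" "r - 2 + 1 < a" using assms(1,7) k_ge_3 by linarith+
  then have "(q + (j + 1 + 0)) mod a = r - 2 + 1"
    using assms(6) mod_Suc_eq[of "q + j" a] by simp
  moreover have "special_column (r - 2) = r - 2" "special_column (r - 2 + 1) = r - 2 + 1"
    using \<open>r - 2 + 1 \<le> k - 2\<close> by (simp_all add: special_column_eq)
  ultimately have "\<not> r \<le> special_column ((q + j) mod a)"
    and "\<not> special_column ((q + (j + 1 + 0)) mod a) < r + R - k"
    using assms(1,3,4,6) by auto
  then show ?thesis
    by (intro rainbow_walk_wrap[where j = j and h = 0]) (use assms in auto)
qed

lemma rainbow_walk_wrap_corner:
  assumes "3 \<le> a" "k - 1 \<le> a" "r < k" "R < k" "k \<le> r + R" "q = r - 2 + 1" "Q = a - 2"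
  shows "has_rainbow_walk right_colour (q * k + r) Q R"
proof -
  have "Q < a" "r \<le> a" "r + R - k < r" using assms(1-5,7) by linarith+
  then consider "r + R - k \<le> r - 2" | "r + R - k = r - 1" "2 \<le> r" "r < a"
    | "r + R - k = r - 1" "2 \<le> r" "r = a"
    by linarith
  then show ?thesis
  proof cases
    case 1
    have "q + (Q + 1 + 0) = r - 2 + a" using assms(1,6,7) by simp
    then have "(q + (Q + 1 + 0)) mod a = r - 2"
      using \<open>r \<le> a\<close> by simp
    moreover have "special_column (r - 2) = r - 2"
      using assms(3) by (simp add: special_column_eq)
    ultimately have "\<not> special_column ((q + (Q + 1 + 0)) mod a) < r + R - k"
      using 1 by simp
    moreover have "Q < (Q + 1) mod a" using assms(1,7) by simp
    ultimately show ?thesis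
      by (intro rainbow_walk_wrap[where j = Q and h = 0]) (use assms(3-5) \<open>Q < a\<close> in auto)
  next
    case 2
    then have "(q + 0) mod a = r - 1" "(q + (0 + 1 + 0)) mod a = r"
      using assms(5,6) by auto
    moreover have "special_column (r - 1) = r - 1" "r - 1 \<le> special_column r"
      using assms(3) by (simp_all add: special_column_def)
    ultimately have "\<not> r \<le> special_column ((q + 0) mod a)"
      and "\<not> special_column ((q + (0 + 1 + 0)) mod a) < r + R - k"
      using 2 assms(3,5) by auto
    then show ?thesis
      by (intro rainbow_walk_wrap[where j = 0 and h = 0]) (use assms(3-5) \<open>Q < a\<close> in auto)
  next
    case 3
    then have row: "(q + 0) mod a = a - 1" and "k = a + 1"
      using assms(1,2,3,6) by auto
    have "special_column (a - 1) = a - 1"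
      by (rule special_column_eq) (use \<open>k = a + 1\<close> in simp)
    then have "\<not> r \<le> special_column ((q + 0) mod a)"
      using row 3 assms(1) by simp
    moreover have "Q < (0 + (a - 3) + 2) mod a"
      using assms(1,7) by simp
    ultimately show ?thesis
      by (intro rainbow_walk_wrap[where j = 0 and h = "a - 3"]) (use assms(1,3-5,7) \<open>Q < a\<close> in auto)
  qed
qed

lemma rainbow_walk_exists:
  assumes "3 \<le> a" "k - 1 \<le> a" "r < k" "q < a" "Q < a" "R < k"
  shows "has_rainbow_walk right_colour (q * k + r) Q R"
proof -
  consider "r + R < k" | "k \<le> r + R" "Q + 3 \<le> a" | "k \<le> r + R" "a \<le> Q + 2"
    by linarith
  then show ?thesis
  proof cases
    case 1
    then show ?thesis using rainbow_walk_no_wrap assms(5) by blast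
  next
    case 2
    then show ?thesis using rainbow_walk_wrap_short assms(3,6) by blast
  next
    case 3
    have "r - 2 + 1 < a" using assms(2,3) k_ge_3 by linarith
    define j where "j = (r - 2 + a - q) mod a"
    have "q + (r - 2 + a - q) = r - 2 + a" using assms(4) by simp
    then have j: "(q + j) mod a = r - 2" "j < a"
      using \<open>r - 2 + 1 < a\<close> a_ge_2 unfolding j_def by (simp_all add: mod_add_right_eq)
    show ?thesis
    proof (cases "j \<le> Q")
      case True
      then show ?thesis using rainbow_walk_wrap_aligned j(1) assms 3 by blast
    next
      case False
      then have "j = a - 1" "Q = a - 2" using j(2) 3 assms(5) by linarith+
      have "q = r - 2 + 1"
      proof (cases q)
        case 0
        then show ?thesis using j \<open>j = a - 1\<close> \<open>r - 2 + 1 < a\<close> by simp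
      next
        case (Suc p)
        have "q + j = p + a" using Suc \<open>j = a - 1\<close> a_ge_2 by simp
        then have "r - 2 = (p + a) mod a" using j(1) by simp
        then show ?thesis using Suc assms(4) by simp
      qed
      then show ?thesis
        using rainbow_walk_wrap_corner assms(1-3,6) 3 \<open>Q = a - 2\<close> by blast
    qed
  qed
qed

lemma grid_colouring_strongly_rainbow_connected:
  assumes colours: "\<And>\<rho> r. \<rho> < a \<Longrightarrow> r < k \<Longrightarrow> c \<rho> r \<in> {1..a + k - 2}"
    and walks: "\<And>q r Q R. q < a \<Longrightarrow> r < k \<Longrightarrow> Q < a \<Longrightarrow> R < k \<Longrightarrow> has_rainbow_walk c (q * k + r) Q R"
  shows "is_colouring arcs (a + k - 2) (grid_colouring c)"
    and "strongly_rainbow_connected {..<n} arcs (grid_colouring c)"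
proof -
  have row: "i div k < a" if "i < n" for i
    using that by (simp add: less_mult_imp_div_less)
  show "is_colouring arcs (a + k - 2) (grid_colouring c)"
    unfolding is_colouring_def
  proof
    fix e assume "e \<in> arcs"
    then obtain i j where "e = (i, j)" "i < n" using arcs_iff by (cases e) blast
    then show "grid_colouring c e \<in> {1..a + k - 2}"
      using colours[of "i div k" "i mod k"] row[of i] k_ge_3 by (auto simp: grid_colouring_def)
  qed
  show "strongly_rainbow_connected {..<n} arcs (grid_colouring c)"
    unfolding strongly_rainbow_connected_def
  proof (intro ballI impI)
    fix u v assume "u \<in> {..<n}" "v \<in> {..<n}"
    then have uv: "u < n" "v < n" by auto
    obtain ms where ms: "count_list ms Down = down_steps u v" "count_list ms Right = right_steps u v"
        "distinct (walk_colours c u ms)"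
      using walks[of "u div k" "u mod k" "down_steps u v" "right_steps u v"] row[OF uv(1)] k_ge_3
        down_steps_less right_steps_less unfolding has_rainbow_walk_def by auto
    have "rainbow (grid_colouring c) (walk u ms)"
      unfolding rainbow_def grid_colouring_walk using ms(3) .
    then show "\<exists>p. is_dipath arcs p u v \<and> length p - 1 = dist_di arcs u v \<and> rainbow (grid_colouring c) p"
      using walk_is_dipath[OF uv ms(2,1)] dist_di_eq[OF uv] by auto
  qed
qed

end

text \<open>The case analysis of \<open>rainbow_walk_exists\<close> needs \<open>a \<ge> 3\<close>; for \<open>a = 2\<close>, \<open>k = 3\<close> this colouring
  is checked exhaustively.\<close>

definition small_right_colour :: "nat \<Rightarrow> nat \<Rightarrow> nat" where
  "small_right_colour \<rho> r = (if \<rho> = 0 then [1, 3, 1] ! r else [3, 2, 3] ! r)"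

lemma small_grid_rainbow_walks:
  assumes "q < 2" "r < 3" "Q < 2" "R < 3"
  shows "circulant_grid.has_rainbow_walk 3 2 small_right_colour (q * 3 + r) Q R"
proof -
  interpret circulant_grid 3 2 by unfold_locales auto
  have "distinct (walk_colours small_right_colour (q * 3 + r) (replicate R Right @ replicate Q Down))
    \<or> distinct (walk_colours small_right_colour (q * 3 + r) (replicate Q Down @ replicate R Right))"
  proof -
    have "q \<in> {0, 1}" "r \<in> {0, 1, 2}" "Q \<in> {0, 1}" "R \<in> {0, 1, 2}" using assms by auto
    moreover have "replicate 2 x = [x, x]" for x :: step
      by (simp add: numeral_2_eq_2)
    ultimately show ?thesis by (auto simp: small_right_colour_def)
  qed
  then show ?thesis
    unfolding has_rainbow_walk_def by (elim disjE) (force simp: count_list_replicate)+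
qed

lemma (in circulant_grid) exists_rainbow_walk_colouring:
  assumes "k - 1 \<le> a"
  shows "\<exists>c. (\<forall>\<rho> r. \<rho> < a \<longrightarrow> r < k \<longrightarrow> c \<rho> r \<in> {1..a + k - 2}) \<and>
    (\<forall>q r Q R. q < a \<longrightarrow> r < k \<longrightarrow> Q < a \<longrightarrow> R < k \<longrightarrow> has_rainbow_walk c (q * k + r) Q R)"
proof (cases "a = 2")
  case True
  then have "k = 3" using assms k_ge_3 by simp
  have "small_right_colour \<rho> r \<in> {1..3}" if "\<rho> < 2" "r < 3" for \<rho> r
    using that by (auto simp: small_right_colour_def less_Suc_eq numeral_3_eq_3 numeral_2_eq_2)
  then show ?thesis
    using small_grid_rainbow_walks True \<open>k = 3\<close> by (intro exI[of _ small_right_colour]) auto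
next
  case False
  then show ?thesis
    using right_colour_bounds rainbow_walk_exists assms a_ge_2 by (intro exI[of _ right_colour]) auto
qed

theorem theorem11:
  fixes k a n :: nat
  assumes "2 \<le> k - 1" and "k - 1 \<le> a" and "n = a * k"
  shows "src_star (circulant_verts n) (circulant_arcs n {1, k}) = a + k - 2
       \<and> rc_star (circulant_verts n) (circulant_arcs n {1, k}) = a + k - 2"
proof -
  interpret circulant_grid k a
    using assms(1,2) by unfold_locales auto
  obtain c where colours: "\<And>\<rho> r. \<rho> < a \<Longrightarrow> r < k \<Longrightarrow> c \<rho> r \<in> {1..a + k - 2}"
    and walks: "\<And>q r Q R. q < a \<Longrightarrow> r < k \<Longrightarrow> Q < a \<Longrightarrow> R < k \<Longrightarrow> has_rainbow_walk c (q * k + r) Q R"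
    using exists_rainbow_walk_colouring assms(2) by blast
  show ?thesis
    unfolding assms(3) circulant_verts_def
    using src_star_rc_star_eqI[OF grid_colouring_strongly_rainbow_connected[OF colours walks]]
      rainbow_connected_colours_ge by blast
qed

end
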